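(* Let $h:[0,1]\to\mathbb{R}$ be continuous with a single turning point at $\delta\in(0,1)$, strictly decreasing on $[0,\delta]$ and strictly increasing on $[\delta,1]$, and with $\lim_{u\to0}h(u)=\lim_{u\to1}h(u)$. Write $h_\ell$ for the restriction of $h$ to $[0,\delta]$ and $h_r$ for its restriction to $[\delta,1]$. Let $F_h$ be the distribution function of $h(U_0)$, $U_0\sim\mathcal{U}(0,1)$. Then $T_h=F_h\circ h$ is a v-transform with fulcrum $\delta$ and generator $\Psi(x)=(1-\delta)^{-1}\big(1-h_r^{-1}\circ h_\ell(\delta x)\big)$. If $h$ is symmetric about $\delta=0.5$, then $\Psi(x)=x$ and $T_h=T_\vee$, where $T_\vee(u)=|2u-1|$.
   Context: A v-transform with fulcrum $\delta\in(0,1)$ and generator $\Psi$ (a continuous, strictly increasing distribution function on $[0,1]$) is the function $T(u)=(1-u)-(1-\delta)\Psi(u/\delta)$ for $u\le\delta$ and $T(u)=u-\delta\Psi^{-1}\big(\tfrac{1-u}{1-\delta}\big)$ for $u>\delta$. *)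

theory Defs
  imports "HOL-Analysis.Analysis"
begin

definition vgenerator :: "(real \<Rightarrow> real) \<Rightarrow> bool" where
  "vgenerator \<Psi> \<longleftrightarrow> continuous_on {0..1} \<Psi> \<and> strict_mono_on {0..1} \<Psi> \<and> \<Psi> 0 = 0 \<and> \<Psi> 1 = 1"

definition vtransform :: "real \<Rightarrow> (real \<Rightarrow> real) \<Rightarrow> real \<Rightarrow> real" where
  "vtransform d \<Psi> u =
     (if u \<le> d then (1 - u) - (1 - d) * \<Psi> (u / d)
      else u - d * the_inv_into {0..1} \<Psi> ((1 - u) / (1 - d)))"

definition is_vtransform :: "real \<Rightarrow> (real \<Rightarrow> real) \<Rightarrow> (real \<Rightarrow> real) \<Rightarrow> bool" where
  "is_vtransform d \<Psi> T \<longleftrightarrow> 0 < d \<and> d < 1 \<and> vgenerator \<Psi> \<and>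
     (\<forall>u\<in>{0..1}. T u = vtransform d \<Psi> u)"

text \<open>Distribution function of h(U0), U0 uniform on (0,1).\<close>
definition distfun :: "(real \<Rightarrow> real) \<Rightarrow> real \<Rightarrow> real" where
  "distfun h x = measure lborel {u \<in> {0..1}. h u \<le> x}"

end

theory Submission
  imports Defs
begin

text \<open>For a level \<open>y\<close> between the minimum \<open>h \<delta>\<close> and the common boundary value \<open>h 0 = h 1\<close>,
  the sublevel set \<open>{h \<le> y}\<close> is the interval between the two preimages of \<open>y\<close>, so
  \<open>F\<^sub>h y = h\<^sub>r\<inverse> y - h\<^sub>l\<inverse> y\<close>. At \<open>y = h u\<close> one of the preimages is \<open>u\<close> itself, and expressing
  the other one through \<open>\<Psi>\<close> gives exactly the two branches of the v-transform formula.\<close>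

lemma reflection_of_symmetric_about_half:
  fixes f :: "real \<Rightarrow> 'a"
  assumes "\<forall>x\<in>{0..1/2}. f (1/2 - x) = f (1/2 + x)" and "u \<in> {0..1}"
  shows "f (1 - u) = f u"
proof (cases "u \<le> 1/2")
  case True
  then show ?thesis using assms(1)[rule_format, of "1/2 - u"] assms(2) by simp
next
  case False
  then show ?thesis using assms(1)[rule_format, of "u - 1/2"] assms(2) by simp
qed

locale v_shaped =
  fixes h :: "real \<Rightarrow> real" and \<delta> :: real
  assumes fulcrum: "0 < \<delta>" "\<delta> < 1"
    and continuous: "continuous_on {0..1} h"
    and decreasing: "strict_antimono_on {0..\<delta>} h"
    and increasing: "strict_mono_on {\<delta>..1} h"
    and ends_eq: "h 1 = h 0"
begin

definition inv_left :: "real \<Rightarrow> real" where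
  "inv_left = the_inv_into {0..\<delta>} h"

definition inv_right :: "real \<Rightarrow> real" where
  "inv_right = the_inv_into {\<delta>..1} h"

definition generator :: "real \<Rightarrow> real" where
  "generator x = (1 - inv_right (h (\<delta> * x))) / (1 - \<delta>)"

lemma left_le_iff: "x \<in> {0..\<delta>} \<Longrightarrow> y \<in> {0..\<delta>} \<Longrightarrow> h x \<le> h y \<longleftrightarrow> y \<le> x"
  using monotone_onD[OF decreasing, of x y] monotone_onD[OF decreasing, of y x]
  by (cases x y rule: linorder_cases) auto

lemma right_le_iff: "x \<in> {\<delta>..1} \<Longrightarrow> y \<in> {\<delta>..1} \<Longrightarrow> h x \<le> h y \<longleftrightarrow> x \<le> y"
  by (rule strict_mono_on_less_eq[OF increasing])

lemma inj_on_left: "inj_on h {0..\<delta>}"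
  using decreasing strict_antimono_iff_antimono by blast

lemma inj_on_right: "inj_on h {\<delta>..1}"
  by (rule strict_mono_on_imp_inj_on[OF increasing])

lemma continuous_on_left: "continuous_on {0..\<delta>} h"
  using continuous fulcrum by (auto intro: continuous_on_subset)

lemma continuous_on_right: "continuous_on {\<delta>..1} h"
  using continuous fulcrum by (auto intro: continuous_on_subset)

lemma image_left: "h ` {0..\<delta>} = {h \<delta>..h 0}"
proof
  show "h ` {0..\<delta>} \<subseteq> {h \<delta>..h 0}"
    using left_le_iff[of \<delta>] left_le_iff[of _ 0] fulcrum by auto
  show "{h \<delta>..h 0} \<subseteq> h ` {0..\<delta>}"
  proof
    fix y assume "y \<in> {h \<delta>..h 0}"
    then obtain x where "0 \<le> x" "x \<le> \<delta>" "h x = y"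
      using IVT2'[of h \<delta> y 0] continuous_on_left fulcrum by auto
    then show "y \<in> h ` {0..\<delta>}" by auto
  qed
qed

lemma image_right: "h ` {\<delta>..1} = {h \<delta>..h 0}"
proof
  show "h ` {\<delta>..1} \<subseteq> {h \<delta>..h 0}"
    using right_le_iff[of \<delta>] right_le_iff[of _ 1] fulcrum ends_eq by auto
  show "{h \<delta>..h 0} \<subseteq> h ` {\<delta>..1}"
  proof
    fix y assume "y \<in> {h \<delta>..h 0}"
    then obtain x where "\<delta> \<le> x" "x \<le> 1" "h x = y"
      using IVT'[of h \<delta> y 1] continuous_on_right fulcrum ends_eq by auto
    then show "y \<in> h ` {\<delta>..1}" by auto
  qed
qed

lemma inv_left_mem: "y \<in> {h \<delta>..h 0} \<Longrightarrow> inv_left y \<in> {0..\<delta>}"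
  unfolding inv_left_def using the_inv_into_into[OF inj_on_left] image_left by blast

lemma h_inv_left: "y \<in> {h \<delta>..h 0} \<Longrightarrow> h (inv_left y) = y"
  unfolding inv_left_def using f_the_inv_into_f[OF inj_on_left] image_left by blast

lemma inv_left_h: "x \<in> {0..\<delta>} \<Longrightarrow> inv_left (h x) = x"
  unfolding inv_left_def by (rule the_inv_into_f_f[OF inj_on_left])

lemma inv_right_mem: "y \<in> {h \<delta>..h 0} \<Longrightarrow> inv_right y \<in> {\<delta>..1}"
  unfolding inv_right_def using the_inv_into_into[OF inj_on_right] image_right by blast

lemma h_inv_right: "y \<in> {h \<delta>..h 0} \<Longrightarrow> h (inv_right y) = y"
  unfolding inv_right_def using f_the_inv_into_f[OF inj_on_right] image_right by blast

lemma inv_right_h: "x \<in> {\<delta>..1} \<Longrightarrow> inv_right (h x) = x"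
  unfolding inv_right_def by (rule the_inv_into_f_f[OF inj_on_right])

lemma strict_mono_on_inv_right: "strict_mono_on {h \<delta>..h 0} inv_right"
proof (rule strict_mono_onI)
  fix a b assume "a \<in> {h \<delta>..h 0}" "b \<in> {h \<delta>..h 0}" "a < b"
  then show "inv_right a < inv_right b"
    using strict_mono_on_less[OF increasing] inv_right_mem h_inv_right by metis
qed

lemma continuous_on_inv_right: "continuous_on {h \<delta>..h 0} inv_right"
  using continuous_on_inv_into[OF continuous_on_right compact_Icc inj_on_right] image_right
  unfolding inv_right_def by simp

lemma sublevel_set_eq:
  assumes y: "y \<in> {h \<delta>..h 0}"
  shows "{v \<in> {0..1}. h v \<le> y} = {inv_left y..inv_right y}"
proof -
  have l: "inv_left y \<in> {0..\<delta>}" "h (inv_left y) = y"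
    using inv_left_mem h_inv_left y by auto
  have r: "inv_right y \<in> {\<delta>..1}" "h (inv_right y) = y"
    using inv_right_mem h_inv_right y by auto
  show ?thesis
  proof (intro set_eqI)
    fix v
    show "v \<in> {v \<in> {0..1}. h v \<le> y} \<longleftrightarrow> v \<in> {inv_left y..inv_right y}"
    proof (cases "v \<le> \<delta>")
      case True
      then show ?thesis using l r left_le_iff[of v "inv_left y"] by auto
    next
      case False
      then show ?thesis using l r right_le_iff[of v "inv_right y"] by auto
    qed
  qed
qed

lemma distfun_eq:
  assumes "y \<in> {h \<delta>..h 0}"
  shows "distfun h y = inv_right y - inv_left y"
proof -
  have "inv_left y \<le> inv_right y"
    using inv_left_mem inv_right_mem assms by force
  then show ?thesis
    unfolding distfun_def sublevel_set_eq[OF assms] by simp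
qed

lemma h_scaled_mem: "x \<in> {0..1} \<Longrightarrow> h (\<delta> * x) \<in> {h \<delta>..h 0}"
  using image_left fulcrum by (auto simp: mult_left_le)

lemma generator_inv_left:
  assumes "y \<in> {h \<delta>..h 0}"
  shows "generator (inv_left y / \<delta>) = (1 - inv_right y) / (1 - \<delta>)"
  using h_inv_left[OF assms] fulcrum by (simp add: generator_def)

lemma vgenerator_generator: "vgenerator generator"
  unfolding vgenerator_def
proof (intro conjI)
  have "(\<lambda>x. \<delta> * x) ` {0..1} \<subseteq> {0..\<delta>}"
    using fulcrum by (auto simp: mult_left_le)
  then have "continuous_on {0..1} (\<lambda>x. h (\<delta> * x))"
    by (intro continuous_on_compose2[OF continuous_on_left] continuous_intros)
  then have "continuous_on {0..1} (\<lambda>x. inv_right (h (\<delta> * x)))"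
    by (rule continuous_on_compose2[OF continuous_on_inv_right]) (use h_scaled_mem in blast)
  then show "continuous_on {0..1} generator"
    unfolding generator_def by (intro continuous_intros) (use fulcrum in auto)
  show "strict_mono_on {0..1} generator"
  proof (rule strict_mono_onI)
    fix x y :: real assume xy: "x \<in> {0..1}" "y \<in> {0..1}" "x < y"
    then have "h (\<delta> * y) < h (\<delta> * x)"
      using monotone_onD[OF decreasing] fulcrum by (auto simp: mult_left_le)
    then have "inv_right (h (\<delta> * y)) < inv_right (h (\<delta> * x))"
      using strict_mono_onD[OF strict_mono_on_inv_right] h_scaled_mem xy by blast
    then show "generator x < generator y"
      using fulcrum by (simp add: generator_def divide_strict_right_mono)
  qed
  show "generator 0 = 0"
    using inv_right_h[of 1] ends_eq fulcrum by (simp add: generator_def)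
  show "generator 1 = 1"
    using inv_right_h[of \<delta>] fulcrum by (simp add: generator_def)
qed

lemma distfun_h_eq_vtransform:
  assumes u: "u \<in> {0..1}"
  shows "distfun h (h u) = vtransform \<delta> generator u"
proof (cases "u \<le> \<delta>")
  case True
  then have "inv_left (h u) = u" "h u \<in> {h \<delta>..h 0}"
    using inv_left_h image_left u by auto
  then show ?thesis
    using True generator_inv_left[of "h u"] distfun_eq[of "h u"] fulcrum
    by (simp add: vtransform_def)
next
  case False
  then have u': "u \<in> {\<delta>..1}" using u by auto
  then have y: "h u \<in> {h \<delta>..h 0}" and "inv_right (h u) = u"
    using image_right inv_right_h by auto
  then have "generator (inv_left (h u) / \<delta>) = (1 - u) / (1 - \<delta>)"
    using generator_inv_left by simp
  moreover have "inv_left (h u) / \<delta> \<in> {0..1}"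
    using inv_left_mem[OF y] fulcrum by auto
  ultimately have "the_inv_into {0..1} generator ((1 - u) / (1 - \<delta>)) = inv_left (h u) / \<delta>"
    using vgenerator_generator
    by (intro the_inv_into_f_eq) (auto simp: vgenerator_def intro: strict_mono_on_imp_inj_on)
  then show ?thesis
    using False distfun_eq[OF y] \<open>inv_right (h u) = u\<close> fulcrum by (simp add: vtransform_def)
qed

lemma is_vtransform_distfun: "is_vtransform \<delta> generator (distfun h \<circ> h)"
  unfolding is_vtransform_def
  using fulcrum vgenerator_generator distfun_h_eq_vtransform by simp

context
  assumes symmetric: "\<And>u. u \<in> {0..1} \<Longrightarrow> h (1 - u) = h u"
    and half: "\<delta> = 1/2"
begin

lemma inv_right_symmetric:
  assumes "u \<in> {0..\<delta>}"
  shows "inv_right (h u) = 1 - u"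
proof -
  have "1 - u \<in> {\<delta>..1}" using assms half by auto
  moreover have "h u = h (1 - u)" using symmetric[of u] assms fulcrum by auto
  ultimately show ?thesis by (simp add: inv_right_h)
qed

lemma inv_left_symmetric:
  assumes "u \<in> {\<delta>..1}"
  shows "inv_left (h u) = 1 - u"
proof -
  have "1 - u \<in> {0..\<delta>}" using assms half by auto
  moreover have "h u = h (1 - u)" using symmetric[of "1 - u"] assms fulcrum by auto
  ultimately show ?thesis by (simp add: inv_left_h)
qed

lemma generator_symmetric:
  assumes "x \<in> {0..1}"
  shows "generator x = x"
proof -
  have "\<delta> * x \<in> {0..\<delta>}" using assms fulcrum by (auto simp: mult_left_le)
  then have "generator x = \<delta> * x / (1 - \<delta>)"
    by (simp add: generator_def inv_right_symmetric)
  also have "\<dots> = x" by (simp add: half)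
  finally show ?thesis .
qed

lemma distfun_h_symmetric:
  assumes u: "u \<in> {0..1}"
  shows "distfun h (h u) = \<bar>2 * u - 1\<bar>"
proof (cases "u \<le> \<delta>")
  case True
  then have u': "u \<in> {0..\<delta>}" using u by simp
  then have "h u \<in> {h \<delta>..h 0}" using image_left by blast
  then have "distfun h (h u) = inv_right (h u) - inv_left (h u)" by (rule distfun_eq)
  also have "\<dots> = (1 - u) - u" using u' by (simp add: inv_left_h inv_right_symmetric)
  finally show ?thesis using True by (simp add: half)
next
  case False
  then have u': "u \<in> {\<delta>..1}" using u by simp
  then have "h u \<in> {h \<delta>..h 0}" using image_right by blast
  then have "distfun h (h u) = inv_right (h u) - inv_left (h u)" by (rule distfun_eq)
  also have "\<dots> = u - (1 - u)" using u' by (simp add: inv_right_h inv_left_symmetric)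
  finally show ?thesis using False by (simp add: half)
qed

end

end

theorem proposition6:
  fixes h :: "real \<Rightarrow> real" and \<delta> :: real
  assumes "0 < \<delta>" and "\<delta> < 1"
    and "continuous_on {0..1} h"
    and "\<forall>x\<in>{0..\<delta>}. \<forall>y\<in>{0..\<delta>}. x < y \<longrightarrow> h y < h x"
    and "strict_mono_on {\<delta>..1} h"
    and "(h \<longlongrightarrow> L) (at_right 0)" and "(h \<longlongrightarrow> L) (at_left 1)"
  shows "is_vtransform \<delta>
           (\<lambda>x. (1 - the_inv_into {\<delta>..1} h (h (\<delta> * x))) / (1 - \<delta>))
           (distfun h \<circ> h)
         \<and> ((\<delta> = 1/2 \<and> (\<forall>x\<in>{0..1/2}. h (1/2 - x) = h (1/2 + x))) \<longrightarrow>
              (\<forall>x\<in>{0..1}. (1 - the_inv_into {\<delta>..1} h (h (\<delta> * x))) / (1 - \<delta>) = x)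
            \<and> (\<forall>u\<in>{0..1}. (distfun h \<circ> h) u = \<bar>2 * u - 1\<bar>))"
proof -
  have "L = h 0"
    using tendsto_unique[OF _ assms(6) continuous_on_Icc_at_rightD[OF assms(3)]] by simp
  moreover have "L = h 1"
    using tendsto_unique[OF _ assms(7) continuous_on_Icc_at_leftD[OF assms(3)]] by simp
  moreover have "strict_antimono_on {0..\<delta>} h"
    using assms(4) by (auto intro: monotone_onI)
  ultimately interpret v_shaped h \<delta>
    using assms by unfold_locales auto
  have generator_eq: "(1 - the_inv_into {\<delta>..1} h (h (\<delta> * x))) / (1 - \<delta>) = generator x" for x
    by (simp add: generator_def inv_right_def)
  have symmetric_case: "(\<forall>x\<in>{0..1}. generator x = x) \<and> (\<forall>u\<in>{0..1}. (distfun h \<circ> h) u = \<bar>2 * u - 1\<bar>)"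
    if half: "\<delta> = 1/2" and symmetric: "\<forall>x\<in>{0..1/2}. h (1/2 - x) = h (1/2 + x)"
  proof -
    note reflection = reflection_of_symmetric_about_half[OF symmetric]
    show ?thesis
      using generator_symmetric[OF reflection half] distfun_h_symmetric[OF reflection half] by simp
  qed
  show ?thesis
    unfolding generator_eq using is_vtransform_distfun symmetric_case by blast
qed

end
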